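(* For every $\varepsilon>0$ there is a constant $C_\varepsilon>0$ such that for every positive integer $n$ with $s=\omega(n)\ge 2$, \[ d(n)\le C_\varepsilon\left(\frac{(2+\varepsilon)\log n}{s\log s}\right)^{s}. \]
   Context: $d(n)$ is the number of positive divisors of $n$; $\omega(n)$ is the number of distinct prime factors of $n$. *)

theory Defs
  imports "HOL-Analysis.Analysis" "HOL-Computational_Algebra.Primes"
begin

definition num_divisors :: "nat \<Rightarrow> nat" where
  "num_divisors n = card {k. k dvd n}"

definition omega :: "nat \<Rightarrow> nat" where
  "omega n = card (prime_factors n)"

end

theory Submission
  imports Defs
begin

(* Write n = \<Prod> p^(a p) with s = \<omega>(n) distinct primes p.  Then d(n) \<le> \<Prod> (a p + 1), and by
   AM-GM applied to the numbers (a p + 1) ln p, whose sum is at most 2 ln n because a p \<ge> 1,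
     d(n) \<cdot> \<Prod> ln p \<le> (2 ln n / s)^s.
   It therefore suffices to bound the product of the logarithms of s distinct primes from
   below by c (r ln s)^s, for every fixed r < 1; taking r = 2/(2+\<epsilon>) gives the theorem.
   This lower bound holds for any s distinct integers \<ge> 2: for a fixed t with r < t < 1, at
   most s^t + 1 of them lie below s^t and each contributes a factor \<ge> ln 2, while every other
   one contributes a factor \<ge> t ln s.  For large s the loss from the small ones is at most
   s^(s^t+1) \<le> (t/r)^s, and the finitely many remaining values of s are absorbed into c. *)

lemma prod_le_mean_power:
  fixes x :: "'a \<Rightarrow> real"
  assumes "finite S" "S \<noteq> {}" "\<And>i. i \<in> S \<Longrightarrow> x i \<ge> 0"
  shows "(\<Prod>i\<in>S. x i) \<le> ((\<Sum>i\<in>S. x i) / card S) ^ card S"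
proof -
  have card_pos: "card S > 0" using assms by (simp add: card_gt_0_iff)
  have prod_ge_0: "(\<Prod>i\<in>S. x i) \<ge> 0" using assms by (simp add: prod_nonneg)
  have "(\<Prod>i\<in>S. x i) powr (1 / card S) \<le> (\<Sum>i\<in>S. x i / card S)"
    by (rule arith_geom_mean[OF assms])
  also have "\<dots> = (\<Sum>i\<in>S. x i) / card S" by (simp add: sum_divide_distrib)
  finally have mean: "(\<Prod>i\<in>S. x i) powr (1 / card S) \<le> (\<Sum>i\<in>S. x i) / card S" .
  have "(\<Prod>i\<in>S. x i) = ((\<Prod>i\<in>S. x i) powr (1 / card S)) ^ card S"
    using card_pos prod_ge_0 by (cases "(\<Prod>i\<in>S. x i) = 0") (simp_all add: powr_power)
  also have "\<dots> \<le> ((\<Sum>i\<in>S. x i) / card S) ^ card S"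
    by (rule power_mono[OF mean]) simp
  finally show ?thesis .
qed

text \<open>A divisor of n is determined by its multiplicities at the primes of n, and each
  such multiplicity lies in {0..multiplicity p n}; hence d(n) \<le> \<Prod> (a p + 1).\<close>
lemma num_divisors_le_prod_multiplicity:
  assumes "n > (0::nat)"
  shows "num_divisors n \<le> (\<Prod>p\<in>prime_factors n. multiplicity p n + 1)"
proof -
  define P where "P = prime_factors n"
  define exps where "exps = (\<lambda>d. restrict (\<lambda>p. multiplicity p d) P)"
  have inj: "inj_on exps {d. d dvd n}"
  proof (rule inj_onI)
    fix d1 d2 assume d1: "d1 \<in> {d. d dvd n}" and d2: "d2 \<in> {d. d dvd n}"
      and eq: "exps d1 = exps d2"
    have "multiplicity p d1 = multiplicity p d2" if "prime p" for p
    proof (cases "p \<in> P")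
      case True then show ?thesis using fun_cong[OF eq, of p] by (simp add: exps_def)
    next
      case False
      then have "multiplicity p n = 0"
        using that assms by (auto simp: P_def in_prime_factors_iff not_dvd_imp_multiplicity_0)
      moreover have "multiplicity p d1 \<le> multiplicity p n" "multiplicity p d2 \<le> multiplicity p n"
        using d1 d2 assms by (auto intro!: dvd_imp_multiplicity_le)
      ultimately show ?thesis by simp
    qed
    moreover have "d1 \<noteq> 0" "d2 \<noteq> 0" using d1 d2 assms by auto
    ultimately have "normalize d1 = normalize d2" by (intro multiplicity_eq_imp_eq) auto
    then show "d1 = d2" by simp
  qed
  have range: "exps ` {d. d dvd n} \<subseteq> PiE P (\<lambda>p. {0..multiplicity p n})"
    using assms by (auto simp: exps_def intro!: dvd_imp_multiplicity_le)
  have "num_divisors n = card (exps ` {d. d dvd n})"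
    unfolding num_divisors_def using inj by (simp add: card_image)
  also have "\<dots> \<le> card (PiE P (\<lambda>p. {0..multiplicity p n}))"
    by (rule card_mono[OF _ range]) (simp add: P_def finite_PiE)
  also have "\<dots> = (\<Prod>p\<in>P. multiplicity p n + 1)"
    by (simp add: card_PiE P_def)
  finally show ?thesis by (simp add: P_def)
qed

lemma ln_eq_sum_multiplicity:
  assumes "n > (0::nat)"
  shows "ln (real n) = (\<Sum>p\<in>prime_factors n. real (multiplicity p n) * ln (real p))"
proof -
  have "real n = (\<Prod>p\<in>prime_factors n. real p ^ multiplicity p n)"
    by (subst prime_factorization_nat[OF assms]) simp
  then have "ln (real n) = (\<Sum>p\<in>prime_factors n. ln (real p ^ multiplicity p n))"
    by (simp only:) (subst ln_prod, auto simp: in_prime_factors_iff prime_gt_0_nat)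
  also have "\<dots> = (\<Sum>p\<in>prime_factors n. real (multiplicity p n) * ln (real p))"
    by (intro sum.cong refl) (simp add: ln_realpow prime_gt_0_nat)
  finally show ?thesis .
qed

text \<open>The upper half of the argument: d(n) \<cdot> \<Prod> ln p \<le> (2 ln n / \<omega>(n))^\<omega>(n), by AM-GM
  applied to the weights (a p + 1) ln p, whose sum is at most 2 ln n since every a p \<ge> 1.\<close>
lemma num_divisors_times_prod_ln_le:
  assumes n: "n > (0::nat)" and om: "omega n \<ge> 1"
  shows "real (num_divisors n) * (\<Prod>p\<in>prime_factors n. ln (real p))
           \<le> (2 * ln (real n) / omega n) ^ omega n"
proof -
  define P where "P = prime_factors n"
  define w where "w = (\<lambda>p. real (multiplicity p n + 1) * ln (real p))"
  have card_P: "card P = omega n" by (simp add: P_def omega_def)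
  have ne: "P \<noteq> {}" using om card_P by auto
  have ln_nonneg: "0 \<le> ln (real p)" if "p \<in> P" for p
    using that prime_ge_2_nat[of p] by (simp add: P_def in_prime_factors_iff)
  have mult_pos: "multiplicity p n \<ge> 1" if "p \<in> P" for p
    using that n by (auto simp: P_def prime_factors_multiplicity)
  have sum_w: "(\<Sum>p\<in>P. w p) \<le> 2 * ln (real n)"
  proof -
    have "(\<Sum>p\<in>P. w p) = (\<Sum>p\<in>P. real (multiplicity p n) * ln (real p)) + (\<Sum>p\<in>P. ln (real p))"
      by (simp add: w_def algebra_simps sum.distrib)
    also have "(\<Sum>p\<in>P. ln (real p)) \<le> (\<Sum>p\<in>P. real (multiplicity p n) * ln (real p))"
    proof (rule sum_mono)
      fix p assume p: "p \<in> P"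
      show "ln (real p) \<le> real (multiplicity p n) * ln (real p)"
        using mult_pos[OF p] ln_nonneg[OF p] by (simp add: mult_le_cancel_right1)
    qed
    finally show ?thesis using ln_eq_sum_multiplicity[OF n] by (simp add: P_def)
  qed
  have "real (num_divisors n) \<le> real (\<Prod>p\<in>P. multiplicity p n + 1)"
    unfolding P_def using num_divisors_le_prod_multiplicity[OF n] by (simp only: of_nat_le_iff)
  then have "real (num_divisors n) * (\<Prod>p\<in>P. ln (real p))
          \<le> (\<Prod>p\<in>P. real (multiplicity p n + 1)) * (\<Prod>p\<in>P. ln (real p))"
    using ln_nonneg by (intro mult_right_mono prod_nonneg) (simp_all only: of_nat_prod)
  also have "\<dots> = (\<Prod>p\<in>P. w p)" by (simp add: w_def prod.distrib)
  also have "\<dots> \<le> ((\<Sum>p\<in>P. w p) / card P) ^ card P"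
  proof (rule prod_le_mean_power[OF _ ne])
    show "finite P" by (simp add: P_def)
  qed (simp add: w_def ln_nonneg)
  also have "\<dots> \<le> (2 * ln (real n) / omega n) ^ omega n"
    unfolding card_P using sum_w ln_nonneg
    by (intro power_mono divide_right_mono divide_nonneg_nonneg sum_nonneg mult_nonneg_nonneg)
      (auto simp: w_def)
  finally show ?thesis by (simp add: P_def)
qed

lemma card_below_le:
  fixes A :: "nat set" and x :: real
  assumes "x \<ge> 0"
  shows "real (card {a\<in>A. real a < x}) \<le> x + 1"
proof -
  have "{a\<in>A. real a < x} \<subseteq> {..< nat \<lceil>x\<rceil>}"
  proof
    fix a assume "a \<in> {a\<in>A. real a < x}"
    then have "of_int (int a) < x" by simp
    then have "int a < \<lceil>x\<rceil>" by (simp only: less_ceiling_iff)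
    then show "a \<in> {..< nat \<lceil>x\<rceil>}" by simp
  qed
  then have "card {a\<in>A. real a < x} \<le> nat \<lceil>x\<rceil>"
    using card_mono[of "{..< nat \<lceil>x\<rceil>}"] by simp
  then show ?thesis using assms by linarith
qed

lemma prod_ln_split_bound:
  fixes A :: "nat set" and x :: real
  assumes A: "finite A" "\<And>a. a \<in> A \<Longrightarrow> a \<ge> 2" and x: "x \<ge> 1"
  defines "m \<equiv> card {a\<in>A. real a < x}"
  shows "ln 2 ^ m * ln x ^ (card A - m) \<le> (\<Prod>a\<in>A. ln (real a))"
proof -
  define S where "S = {a\<in>A. real a < x}"
  have S: "S \<subseteq> A" "finite S" using A by (auto simp: S_def)
  have ln2: "ln 2 \<le> ln (real a)" "0 \<le> ln (real a)" if "a \<in> A" for a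
    using A(2)[OF that] ln_ge_zero[of "real a"] by auto
  have "ln 2 ^ m = (\<Prod>a\<in>S. ln (2::real))" by (simp add: m_def S_def)
  also have "\<dots> \<le> (\<Prod>a\<in>S. ln (real a))"
    using ln2 S(1) by (intro prod_mono) auto
  finally have small: "ln 2 ^ m \<le> (\<Prod>a\<in>S. ln (real a))" .
  have "ln x ^ (card A - m) = (\<Prod>a\<in>A - S. ln x)"
    using S A by (simp add: m_def S_def card_Diff_subset)
  also have "\<dots> \<le> (\<Prod>a\<in>A - S. ln (real a))"
    using x by (intro prod_mono) (auto simp: S_def)
  finally have large: "ln x ^ (card A - m) \<le> (\<Prod>a\<in>A - S. ln (real a))" .
  have "ln 2 ^ m * ln x ^ (card A - m) \<le> (\<Prod>a\<in>S. ln (real a)) * (\<Prod>a\<in>A - S. ln (real a))"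
    using small large x ln2 S(1) by (intro mult_mono prod_nonneg) auto
  also have "\<dots> = (\<Prod>a\<in>A. ln (real a))"
    by (metis prod.subset_diff[OF S(1) A(1)] mult.commute)
  finally show ?thesis .
qed

text \<open>For 0 < t < 1 and a > 0, eventually (s^t + 1) \<cdot> ln s \<le> a \<cdot> s; the proof uses
  ln s \<le> s^u / u with u = (1 - t)/2.\<close>
lemma powr_ln_eventually_le:
  fixes t a :: real
  assumes t: "0 < t" "t < 1" and a: "a > 0"
  shows "\<exists>N. \<forall>s\<ge>N. (real s powr t + 1) * ln (real s) \<le> a * real s"
proof (intro exI allI impI)
  define u where "u = (1 - t) / 2"
  have u: "u > 0" "t + u + u = 1" using t by (auto simp: u_def)
  fix s :: nat assume s: "s \<ge> nat \<lceil>(2/(u*a)) powr (1/u)\<rceil> + 2"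
  have s2: "real s \<ge> 2" using s by simp
  have "(2/(u*a)) powr (1/u) \<le> real s" using s by linarith
  then have "((2/(u*a)) powr (1/u)) powr u \<le> real s powr u"
    using u by (intro powr_mono2) auto
  then have su: "2/(u*a) \<le> real s powr u"
    using u a by (simp add: powr_powr)
  have "u * ln (real s) = ln (real s powr u)" using s2 by (simp add: ln_powr)
  also have "\<dots> \<le> real s powr u - 1" using s2 by (intro ln_le_minus_one) simp
  finally have ln_le: "ln (real s) \<le> real s powr u / u" using u by (simp add: field_simps)
  have "1 \<le> real s powr t" using s2 t by (intro ge_one_powr_ge_zero) auto
  then have "(real s powr t + 1) * ln (real s) \<le> (2 * real s powr t) * (real s powr u / u)"
    using ln_le s2 by (intro mult_mono) auto
  also have "\<dots> = (2/u) * real s powr (t + u)" by (simp add: powr_add)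
  also have "\<dots> \<le> (a * real s powr u) * real s powr (t + u)"
    using su u a by (intro mult_right_mono) (auto simp: field_simps)
  also have "\<dots> = a * real s powr (t + u + u)" by (simp only: powr_add mult_ac)
  also have "\<dots> = a * real s" using u s2 by simp
  finally show "(real s powr t + 1) * ln (real s) \<le> a * real s" .
qed

lemma prod_ln_lower_large:
  fixes A :: "nat set" and r t :: real
  assumes A: "finite A" "\<And>a. a \<in> A \<Longrightarrow> a \<ge> 2" and s: "card A \<ge> 2"
    and r: "0 < r" "r < t" "t < 1"
    and large: "(real (card A) powr t + 1) * ln (real (card A)) \<le> ln (t/r) * real (card A)"
  shows "(r * ln (real (card A))) ^ card A \<le> (\<Prod>a\<in>A. ln (real a))"
proof -
  define s where "s = card A"
  define x where "x = real s powr t"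
  define m where "m = card {a\<in>A. real a < x}"
  define L where "L = t * ln (real s)"
  have s2: "real s \<ge> 2" using s by (simp add: s_def)
  have L: "L = ln x" "L > 0" using s2 r by (simp_all add: L_def x_def ln_powr)
  have x1: "x \<ge> 1" using s2 r by (simp add: x_def ge_one_powr_ge_zero)
  have m_le_s: "m \<le> s" unfolding m_def s_def using A(1) by (intro card_mono) auto
  have P_lower: "ln 2 ^ m * L ^ (s - m) \<le> (\<Prod>a\<in>A. ln (real a))"
    using prod_ln_split_bound[OF A x1] L by (simp add: m_def s_def)
  text \<open>Each small element loses at most a factor s against L, since L \<le> s \<cdot> ln 2.\<close>
  have "L \<le> ln (real s)" unfolding L_def using s2 r by (intro mult_left_le_one_le) auto
  also have "\<dots> \<le> ln (2 ^ s)"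
  proof -
    have "real s < real ((2::nat) ^ s)" using less_exp[of s] by (simp only: of_nat_less_iff)
    then show ?thesis using s2 by simp
  qed
  also have "\<dots> = real s * ln 2" by (simp add: ln_realpow)
  finally have "L \<le> ln 2 * real s" by (simp only: mult.commute)
  then have "L ^ m \<le> (ln 2 * real s) ^ m" using L by (intro power_mono) auto
  then have Lm: "L ^ m \<le> ln 2 ^ m * real s ^ m" by (simp only: power_mult_distrib)
  have "(r * ln (real s)) ^ s * (t/r) ^ s = L ^ s"
    using r by (simp add: L_def mult.commute flip: power_mult_distrib)
  also have "\<dots> = L ^ m * L ^ (s - m)" using m_le_s by (simp flip: power_add)
  also have "\<dots> \<le> (ln 2 ^ m * real s ^ m) * L ^ (s - m)"
    using Lm L by (intro mult_right_mono) auto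
  also have "\<dots> = (ln 2 ^ m * L ^ (s - m)) * real s ^ m" by (simp only: mult_ac)
  also have "\<dots> \<le> (\<Prod>a\<in>A. ln (real a)) * (t/r) ^ s"
  proof (intro mult_mono P_lower)
    have "real s ^ m = exp (real m * ln (real s))" using s2 by (simp add: exp_of_nat_mult)
    also have "\<dots> \<le> exp ((x + 1) * ln (real s))"
      using card_below_le[of x A] x1 s2 by (simp add: m_def mult_right_mono)
    also have "\<dots> \<le> exp (ln (t/r) * real s)" using large by (simp add: x_def s_def)
    also have "\<dots> = (t/r) ^ s" using r by (simp add: exp_of_nat_mult mult.commute)
    finally show "real s ^ m \<le> (t/r) ^ s" .
  qed (use L in \<open>auto intro!: prod_nonneg dest: A(2)\<close>)
  finally show ?thesis using r by (simp add: s_def mult_le_cancel_right)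
qed

lemma prod_ln_lower:
  fixes r :: real
  assumes r: "0 < r" "r < 1"
  shows "\<exists>C>0. \<forall>A::nat set. finite A \<longrightarrow> (\<forall>a\<in>A. a \<ge> 2) \<longrightarrow> card A \<ge> 2 \<longrightarrow>
           (r * ln (real (card A))) ^ card A \<le> C * (\<Prod>a\<in>A. ln (real a))"
proof -
  define t where "t = (1 + r) / 2"
  have t: "r < t" "t < 1" "0 < t" using r by (auto simp: t_def)
  obtain N where N: "\<And>s. s \<ge> N \<Longrightarrow> (real s powr t + 1) * ln (real s) \<le> ln (t/r) * real s"
    using powr_ln_eventually_le[of t "ln (t/r)"] t r by auto
  define M where "M = max N 2"
  define C where "C = (real M / ln 2) ^ M"
  have ln2: "0 < ln (2::real)" "ln (2::real) < 1" using ln_2_less_1 by auto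
  have C: "C \<ge> 1"
    unfolding C_def using ln2 by (intro one_le_power) (simp add: M_def field_simps)
  have "\<forall>A::nat set. finite A \<longrightarrow> (\<forall>a\<in>A. a \<ge> 2) \<longrightarrow> card A \<ge> 2 \<longrightarrow>
           (r * ln (real (card A))) ^ card A \<le> C * (\<Prod>a\<in>A. ln (real a))"
  proof (intro allI impI)
    fix A :: "nat set" assume A: "finite A" "\<forall>a\<in>A. a \<ge> 2" "card A \<ge> 2"
    define s where "s = card A"
    have ln_s: "0 \<le> ln (real s)" "ln (real s) \<le> real s"
      using A(3) ln_le_minus_one[of "real s"] by (simp_all add: s_def)
    have P_nonneg: "0 \<le> (\<Prod>a\<in>A. ln (real a))" using A(2) by (intro prod_nonneg) auto
    have "(r * ln (real s)) ^ s \<le> C * (\<Prod>a\<in>A. ln (real a))"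
    proof (cases "s \<ge> N")
      case True
      have "(r * ln (real s)) ^ s \<le> (\<Prod>a\<in>A. ln (real a))"
        unfolding s_def
        by (rule prod_ln_lower_large[OF A(1) _ A(3) r(1) t(1) t(2)])
          (use A(2) N[OF True] in \<open>simp_all add: s_def\<close>)
      also have "\<dots> \<le> C * (\<Prod>a\<in>A. ln (real a))"
        using C P_nonneg by (simp add: mult_le_cancel_right1)
      finally show ?thesis .
    next
      case False
      have sM: "s \<le> M" using False by (simp add: M_def)
      have "r * ln (real s) \<le> real s"
        using r ln_s mult_left_le_one_le[of "ln (real s)" r] by linarith
      then have "(r * ln (real s)) ^ s \<le> real M ^ s"
        using r ln_s sM by (intro power_mono) auto
      also have "\<dots> \<le> real M ^ M" using sM by (intro power_increasing) (auto simp: M_def)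
      also have "\<dots> = C * ln 2 ^ M" using ln2 by (simp add: C_def power_divide)
      also have "\<dots> \<le> C * ln 2 ^ s"
        using sM C ln2 by (intro mult_left_mono power_decreasing) auto
      also have "ln 2 ^ s = (\<Prod>a\<in>A. ln (2::real))" by (simp add: s_def)
      also have "C * \<dots> \<le> C * (\<Prod>a\<in>A. ln (real a))"
        using C A by (intro mult_left_mono prod_mono) auto
      finally show ?thesis .
    qed
    then show "(r * ln (real (card A))) ^ card A \<le> C * (\<Prod>a\<in>A. ln (real a))"
      by (simp add: s_def)
  qed
  then show ?thesis using C by (intro exI[of _ C]) simp
qed

theorem lemma3p2:
  "\<forall>\<epsilon>::real. \<epsilon> > 0 \<longrightarrow>
     (\<exists>C::real. C > 0 \<and>
        (\<forall>n::nat. n > 0 \<longrightarrow> omega n \<ge> 2 \<longrightarrow>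
           real (num_divisors n) \<le>
             C * (((2 + \<epsilon>) * ln (real n)) / (real (omega n) * ln (real (omega n)))) ^ omega n))"
proof (intro allI impI)
  fix \<epsilon> :: real assume e: "\<epsilon> > 0"
  define r where "r = 2 / (2 + \<epsilon>)"
  have r: "0 < r" "r < 1" using e by (auto simp: r_def)
  obtain C where C: "C > 0" and lower: "\<And>A::nat set. finite A \<Longrightarrow> \<forall>a\<in>A. a \<ge> 2 \<Longrightarrow>
      card A \<ge> 2 \<Longrightarrow> (r * ln (real (card A))) ^ card A \<le> C * (\<Prod>a\<in>A. ln (real a))"
    using prod_ln_lower[OF r] by blast
  show "\<exists>C>0. \<forall>n. n > 0 \<longrightarrow> omega n \<ge> 2 \<longrightarrow> real (num_divisors n) \<le>
      C * (((2 + \<epsilon>) * ln (real n)) / (real (omega n) * ln (real (omega n)))) ^ omega n"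
  proof (intro exI[of _ C] conjI allI impI)
    fix n :: nat assume n: "n > 0" and om: "omega n \<ge> 2"
    define s where "s = omega n"
    define R where "R = (r * ln (real s)) ^ s"
    have R: "R > 0" using r om by (simp add: R_def s_def)
    have "\<forall>p\<in>prime_factors n. p \<ge> 2"
      by (auto intro: prime_ge_2_nat dest: in_prime_factors_imp_prime)
    then have "R \<le> C * (\<Prod>p\<in>prime_factors n. ln (real p))"
      using lower[of "prime_factors n"] om by (simp add: R_def s_def omega_def)
    then have "real (num_divisors n) * R
        \<le> real (num_divisors n) * (C * (\<Prod>p\<in>prime_factors n. ln (real p)))"
      by (rule mult_left_mono) simp
    also have "\<dots> = C * (real (num_divisors n) * (\<Prod>p\<in>prime_factors n. ln (real p)))"
      by simp
    also have "\<dots> \<le> C * (2 * ln (real n) / s) ^ s"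
      using num_divisors_times_prod_ln_le[OF n] om C by (simp add: s_def)
    finally have "real (num_divisors n) \<le> C * (2 * ln (real n) / s) ^ s / R"
      using R by (simp add: pos_le_divide_eq)
    also have "\<dots> = C * ((2 * ln (real n) / s) / (r * ln s)) ^ s"
      by (simp only: R_def power_divide times_divide_eq_right)
    also have "(2 * ln (real n) / s) / (r * ln s) = (2 + \<epsilon>) * ln (real n) / (s * ln s)"
      using e by (simp add: r_def divide_simps)
    finally show "real (num_divisors n) \<le>
        C * (((2 + \<epsilon>) * ln (real n)) / (real (omega n) * ln (real (omega n)))) ^ omega n"
      unfolding s_def .
  qed (rule C)
qed

end
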